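(* Let $U$ be an open subset of $\mathbb{R}^2$ and $I,J$ two real intervals. Let $u:U\times J\to I$ be a $C^1$ function such that $u(\cdot,\cdot\,;s)$ is harmonic for every $s\in J$, and such that there exists a $C^1$ function $t:U\times I\to J$ with $u(x,y;t(x,y;z))=z$ for all $(x,y,z)\in U\times I$. Define on $U\times I$ the vector field $$\phi(x,y,z):=\big(2\nabla u(x,y;t(x,y;z)),\ |\nabla u(x,y;t(x,y;z))|^2\big),$$ where $\nabla u(x,y;t(x,y;z))$ denotes the gradient of $u$ with respect to $(x,y)$ evaluated at $(x,y;t(x,y;z))$. Then $\phi$ is divergence free in $U\times I$. *)

theory Defs
  imports "HOL-Analysis.Analysis"
begin

definition C1_on :: "('a::real_normed_vector) set \<Rightarrow> ('a \<Rightarrow> 'b::real_normed_vector) \<Rightarrow> bool" where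
  "C1_on S f \<longleftrightarrow> (\<exists>Df. (\<forall>p\<in>S. (f has_derivative Df p) (at p within S)) \<and>
                        (\<forall>v. continuous_on S (\<lambda>p. Df p v)))"

text \<open>Harmonic on an open set U of R^2: C^2 with vanishing Laplacian.
  g is the gradient, H p the derivative (Hessian) of the gradient at p.\<close>
definition harmonic_on :: "(real \<times> real) set \<Rightarrow> (real \<times> real \<Rightarrow> real) \<Rightarrow> bool" where
  "harmonic_on U f \<longleftrightarrow>
     (\<exists>g H. (\<forall>p\<in>U. (f has_derivative (\<lambda>h. g p \<bullet> h)) (at p)) \<and>
            (\<forall>p\<in>U. (g has_derivative H p) (at p)) \<and>
            (\<forall>v. continuous_on U (\<lambda>p. H p v)) \<and>
            (\<forall>p\<in>U. fst (H p (1,0)) + snd (H p (0,1)) = 0))"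

definition grad_xy :: "((real \<times> real) \<times> real \<Rightarrow> real) \<Rightarrow> real \<times> real \<Rightarrow> real \<Rightarrow> real \<times> real" where
  "grad_xy u p s = (SOME g. ((\<lambda>q. u (q, s)) has_derivative (\<lambda>h. g \<bullet> h)) (at p))"

definition phi_field :: "((real \<times> real) \<times> real \<Rightarrow> real) \<Rightarrow> ((real \<times> real) \<times> real \<Rightarrow> real)
                         \<Rightarrow> (real \<times> real) \<times> real \<Rightarrow> (real \<times> real) \<times> real" where
  "phi_field u t = (\<lambda>(p, z). let g = grad_xy u p (t (p, z)) in (2 *\<^sub>R g, (norm g)\<^sup>2))"

definition divergence_free_on :: "((real \<times> real) \<times> real) set \<Rightarrow>
     ((real \<times> real) \<times> real \<Rightarrow> (real \<times> real) \<times> real) \<Rightarrow> bool" where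
  "divergence_free_on S F \<longleftrightarrow>
     (\<forall>q\<in>S. \<exists>D. (F has_derivative D) (at q within S) \<and>
         fst (fst (D ((1,0),0))) + snd (fst (D ((0,1),0))) + snd (D ((0,0),1)) = 0)"

end

theory Submission
  imports Defs "HOL-Complex_Analysis.Complex_Analysis"
begin

(* Fix s and write v = u(.,.;s) and g = grad v. Since v is harmonic, v_x - i v_y is holomorphic
   (the Cauchy-Riemann equations are the symmetry of the Hessian and the vanishing of the
   Laplacian), so v is the real part of a primitive F, and Cauchy's formulas on a circle give
     g(c) = (2/r) (Re M, Im M),   M = int_0^1 v(c + r e^(2 pi i t)) e^(2 pi i t) dt.
   The right-hand side involves u only, so differentiation under the integral sign shows that
   the gradient is jointly differentiable in (x, y, s), although u is merely C^1.
   Differentiating u(x,y; t(x,y;z)) = z gives u_s t_x = -u_x, u_s t_y = -u_y and u_s t_z = 1,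
   and with these the chain rule yields
     div phi = 2 Delta u + 2 (t_x, t_y) . grad u_s + 2 t_z grad u . grad u_s = 2 Delta u = 0. *)

section \<open>Calculus on product spaces\<close>

lemma linear_Pair_split:
  fixes D :: "'a::real_vector \<times> real \<Rightarrow> 'b::real_vector"
  assumes "linear D"
  shows "D (h, \<sigma>) = D (h, 0) + \<sigma> *\<^sub>R D (0, 1)"
proof -
  have "D (h, \<sigma>) = D ((h, 0) + \<sigma> *\<^sub>R (0, 1))" by simp
  then show ?thesis by (simp only: linear_add[OF assms] linear_cmul[OF assms])
qed

lemma has_derivative_partial_fst_within:
  assumes "(F has_derivative D) (at (a, b) within A \<times> B)" and "b \<in> B"
  shows "((\<lambda>x. F (x, b)) has_derivative (\<lambda>h. D (h, 0))) (at a within A)"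
proof -
  have "((\<lambda>x. (x, b)) has_derivative (\<lambda>h. (h, 0))) (at a within A)"
    by (auto intro!: derivative_eq_intros)
  moreover have "(F has_derivative D) (at (a, b) within (\<lambda>x. (x, b)) ` A)"
    using assms by (auto intro: has_derivative_subset)
  ultimately show ?thesis
    using diff_chain_within by (simp add: o_def)
qed

lemma has_derivative_partial_snd_within:
  assumes "(F has_derivative D) (at (a, b) within A \<times> B)" and "a \<in> A"
  shows "((\<lambda>y. F (a, y)) has_derivative (\<lambda>h. D (0, h))) (at b within B)"
proof -
  have "((\<lambda>y. (a, y)) has_derivative (\<lambda>h. (0, h))) (at b within B)"
    by (auto intro!: derivative_eq_intros)
  moreover have "(F has_derivative D) (at (a, b) within (\<lambda>y. (a, y)) ` B)"
    using assms by (auto intro: has_derivative_subset)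
  ultimately show ?thesis
    using diff_chain_within by (simp add: o_def)
qed

lemma has_real_derivative_partial_fst:
  fixes F :: "real \<times> 'a::real_normed_vector \<Rightarrow> real"
  assumes "(F has_derivative D) (at (a, b))"
  shows "((\<lambda>x. F (x, b)) has_real_derivative D (1, 0)) (at a)"
proof -
  have "((\<lambda>x. F (x, b)) has_derivative (\<lambda>h. D (h, 0))) (at a)"
    using has_derivative_partial_fst_within[of F D a b UNIV UNIV] assms by simp
  moreover have "(\<lambda>h. D (h, 0)) = (*) (D (1, 0))"
  proof
    fix h :: real
    have "D (h *\<^sub>R (1, 0)) = h *\<^sub>R D (1, 0)"
      by (rule linear_cmul[OF has_derivative_linear[OF assms]])
    then show "D (h, 0) = D (1, 0) * h" by (simp add: mult.commute)
  qed
  ultimately show ?thesis by (simp add: has_field_derivative_def)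
qed

lemma has_real_derivative_partial_snd:
  fixes F :: "'a::real_normed_vector \<times> real \<Rightarrow> real"
  assumes "(F has_derivative D) (at (a, b))"
  shows "((\<lambda>y. F (a, y)) has_real_derivative D (0, 1)) (at b)"
proof -
  have "((\<lambda>y. F (a, y)) has_derivative (\<lambda>h. D (0, h))) (at b)"
    using has_derivative_partial_snd_within[of F D a b UNIV UNIV] assms by simp
  moreover have "(\<lambda>h. D (0, h)) = (*) (D (0, 1))"
  proof
    fix h :: real
    have "D (h *\<^sub>R (0, 1)) = h *\<^sub>R D (0, 1)"
      by (rule linear_cmul[OF has_derivative_linear[OF assms]])
    then show "D (0, h) = D (0, 1) * h" by (simp add: mult.commute)
  qed
  ultimately show ?thesis by (simp add: has_field_derivative_def)
qed

lemma has_derivative_partial_fst_unique: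
  assumes "open U" and "p \<in> U" and "s \<in> J"
    and "(F has_derivative D) (at (p, s) within U \<times> J)"
    and "((\<lambda>x. F (x, s)) has_derivative L) (at p)"
  shows "D (h, 0) = L h"
proof -
  have "((\<lambda>x. F (x, s)) has_derivative (\<lambda>h. D (h, 0))) (at p)"
    using has_derivative_partial_fst_within[OF assms(4,3)] at_within_open[OF assms(2,1)] by simp
  from has_derivative_unique[OF this assms(5)] show ?thesis by metis
qed

lemma is_interval_nearby_point:
  fixes I :: "real set"
  assumes "is_interval I" and "z \<in> I" and "z' \<in> I" and "z' \<noteq> z" and "e > 0"
  obtains d where "0 < \<bar>d\<bar>" and "\<bar>d\<bar> < e" and "z + d \<in> I"
proof (cases "z < z'")
  case True
  show ?thesis
    using True \<open>e > 0\<close>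
    by (intro that[of "min e (z' - z) / 2"] mem_is_interval_1_I[OF assms(1-3)])
      (auto simp: min_def field_simps)
next
  case False
  then have "z' < z" using \<open>z' \<noteq> z\<close> by simp
  show ?thesis
    using \<open>z' < z\<close> \<open>e > 0\<close>
    by (intro that[of "- (min e (z - z') / 2)"] mem_is_interval_1_I[OF assms(1,3,2)])
      (auto simp: min_def field_simps)
qed

lemma has_derivative_unique_within_Times_interval:
  fixes F :: "'a::euclidean_space \<times> real \<Rightarrow> 'b::real_normed_vector"
  assumes "(F has_derivative D) (at (p, z) within U \<times> I)"
    and "(F has_derivative D') (at (p, z) within U \<times> I)"
    and "open U" and "p \<in> U" and "is_interval I" and "z \<in> I" and "z' \<in> I" and "z' \<noteq> z"
  shows "D = D'"
proof (rule frechet_derivative_unique_within[OF assms(1,2)])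
  fix i :: "'a \<times> real" and e :: real
  assume "i \<in> Basis" and "e > 0"
  obtain \<epsilon> where "\<epsilon> > 0" and "ball p \<epsilon> \<subseteq> U"
    using \<open>open U\<close> \<open>p \<in> U\<close> open_contains_ball by blast
  consider b where "b \<in> Basis" "i = (b, 0)" | "i = (0, 1)"
    using \<open>i \<in> Basis\<close> by (auto simp: Basis_prod_def)
  then show "\<exists>d. 0 < \<bar>d\<bar> \<and> \<bar>d\<bar> < e \<and> (p, z) + d *\<^sub>R i \<in> U \<times> I"
  proof cases
    case (1 b)
    define d where "d = min e \<epsilon> / 2"
    have "dist p (p + d *\<^sub>R b) = \<bar>d\<bar>"
      using \<open>b \<in> Basis\<close> by (simp add: dist_norm)
    then have "p + d *\<^sub>R b \<in> ball p \<epsilon>"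
      using \<open>e > 0\<close> \<open>\<epsilon> > 0\<close> by (simp add: d_def)
    then show ?thesis
      using \<open>e > 0\<close> \<open>\<epsilon> > 0\<close> \<open>ball p \<epsilon> \<subseteq> U\<close> \<open>z \<in> I\<close> 1
      by (intro exI[of _ d]) (auto simp: d_def)
  next
    case 2
    obtain d where "0 < \<bar>d\<bar>" "\<bar>d\<bar> < e" "z + d \<in> I"
      using is_interval_nearby_point[OF assms(5-8) \<open>e > 0\<close>] .
    then show ?thesis
      using \<open>p \<in> U\<close> 2 by (intro exI[of _ d]) auto
  qed
qed

lemma has_derivative_within_slice_add_snd:
  fixes F :: "'a::real_normed_vector \<times> real \<Rightarrow> 'b::real_normed_vector"
  assumes "(F has_derivative D) (at x within S)" and "\<forall>y\<in>S. snd y = snd x" and "x \<in> S"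
  shows "(F has_derivative (\<lambda>w. D w + snd w *\<^sub>R c)) (at x within S)"
proof -
  have "((\<lambda>y. F y + (snd y - snd x) *\<^sub>R c) has_derivative (\<lambda>w. D w + snd w *\<^sub>R c)) (at x within S)"
    using assms(1) by (auto intro!: derivative_eq_intros)
  then show ?thesis
    by (rule has_derivative_transform_within[OF _ zero_less_one \<open>x \<in> S\<close>]) (use assms(2) in auto)
qed

lemma has_derivative_along_graph:
  assumes "(F has_derivative DF) (at (p, t (p, z)) within A \<times> B)"
    and "(t has_derivative Dt) (at (p, z) within A \<times> C)" and "t ` (A \<times> C) \<subseteq> B"
  shows "((\<lambda>y. F (fst y, t y)) has_derivative (\<lambda>w. DF (fst w, Dt w))) (at (p, z) within A \<times> C)"
proof -
  have graph: "((\<lambda>y. (fst y, t y)) has_derivative (\<lambda>w. (fst w, Dt w))) (at (p, z) within A \<times> C)"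
    by (intro derivative_eq_intros assms(2)) (auto intro: assms(2))
  have "(F has_derivative DF) (at (p, t (p, z)) within (\<lambda>y. (fst y, t y)) ` (A \<times> C))"
    using assms(3) by (intro has_derivative_subset[OF assms(1)]) auto
  with diff_chain_within[OF graph, of F DF] show ?thesis
    by (simp add: o_def)
qed

lemma C1_on_imp_continuous_on:
  assumes "C1_on S u" shows "continuous_on S u"
proof -
  obtain Df where "\<forall>p\<in>S. (u has_derivative Df p) (at p within S)"
    using assms unfolding C1_on_def by blast
  then show ?thesis
    using continuous_on_eq_continuous_within has_derivative_continuous by blast
qed

lemma integral_translates_differentiable:
  fixes u :: "'a::euclidean_space \<Rightarrow> real" and \<gamma> :: "real \<Rightarrow> 'a" and k :: "real \<Rightarrow> 'b::banach"
  assumes "C1_on S u" and "convex W" and "x0 \<in> W"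
    and "continuous_on {0..1} \<gamma>" and "continuous_on {0..1} k"
    and S: "\<And>x t. x \<in> W \<Longrightarrow> t \<in> {0..1} \<Longrightarrow> x + \<gamma> t \<in> S"
  shows "(\<lambda>x. integral {0..1} (\<lambda>t. u (x + \<gamma> t) *\<^sub>R k t)) differentiable (at x0 within W)"
proof -
  obtain Du where Du: "\<And>y. y \<in> S \<Longrightarrow> (u has_derivative Du y) (at y within S)"
    and Du_cont: "\<And>w. continuous_on S (\<lambda>y. Du y w)"
    using assms(1) unfolding C1_on_def by blast
  define fx where "fx x t = Blinfun (\<lambda>w. Du (x + \<gamma> t) w *\<^sub>R k t)" for x t
  have fx_apply: "blinfun_apply (fx x t) = (\<lambda>w. Du (x + \<gamma> t) w *\<^sub>R k t)"
    if "x \<in> W" "t \<in> {0..1}" for x t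
    using bounded_linear_compose[OF bounded_linear_scaleR_left
        has_derivative_bounded_linear[OF Du[OF S[OF that]]], of "k t"]
    by (simp add: fx_def bounded_linear_Blinfun_apply)
  have "((\<lambda>x. u (x + \<gamma> t) *\<^sub>R k t) has_derivative blinfun_apply (fx x t)) (at x within W)"
    if "x \<in> W" "t \<in> cbox 0 1" for x t
  proof -
    have "(u has_derivative Du (x + \<gamma> t)) (at (x + \<gamma> t) within (\<lambda>x. x + \<gamma> t) ` W)"
      using that S by (intro has_derivative_subset[OF Du[OF S]]) auto
    from diff_chain_within[OF has_derivative_add_const[OF has_derivative_ident] this]
    show ?thesis
      using that by (auto simp: fx_apply o_def intro!: derivative_eq_intros)
  qed
  moreover have "(\<lambda>t. u (x + \<gamma> t) *\<^sub>R k t) integrable_on cbox 0 1" if "x \<in> W" for x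
    using that S assms(4,5)
    by (auto intro!: integrable_continuous_real continuous_intros
        continuous_on_compose2[OF C1_on_imp_continuous_on[OF assms(1)]])
  moreover have "continuous_on (W \<times> cbox 0 1) (\<lambda>(x, t). fx x t)"
  proof (rule continuous_on_blinfun_componentwise)
    fix i :: 'a
    have "continuous_on (W \<times> {0..1}) (\<lambda>y. Du (fst y + \<gamma> (snd y)) i *\<^sub>R k (snd y))"
      using S assms(4,5)
      by (auto intro!: continuous_intros continuous_on_compose2[OF Du_cont]
          continuous_on_compose2[OF assms(4)] continuous_on_compose2[OF assms(5)])
    then show "continuous_on (W \<times> cbox 0 1) (\<lambda>y. blinfun_apply ((\<lambda>(x, t). fx x t) y) i)"
      unfolding cbox_interval by (rule continuous_on_eq) (auto simp: fx_apply)
  qed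
  ultimately show ?thesis
    using leibniz_rule[of W 0 1 "\<lambda>x t. u (x + \<gamma> t) *\<^sub>R k t" fx x0] assms(2,3)
    by (auto simp: differentiable_def)
qed

section \<open>Symmetry of second derivatives\<close>

lemma double_difference_mean_value:
  fixes v vx vxy :: "real \<times> real \<Rightarrow> real"
  assumes "0 < h"
    and vx: "\<And>a b. a \<in> {x..x+h} \<Longrightarrow> b \<in> {y..y+h} \<Longrightarrow>
      ((\<lambda>a. v (a, b)) has_real_derivative vx (a, b)) (at a)"
    and vxy: "\<And>a b. a \<in> {x..x+h} \<Longrightarrow> b \<in> {y..y+h} \<Longrightarrow>
      ((\<lambda>b. vx (a, b)) has_real_derivative vxy (a, b)) (at b)"
  obtains \<xi> \<eta> where "\<xi> \<in> {x<..<x+h}" and "\<eta> \<in> {y<..<y+h}"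
    and "v (x+h, y+h) - v (x+h, y) - v (x, y+h) + v (x, y) = h\<^sup>2 * vxy (\<xi>, \<eta>)"
proof -
  have "((\<lambda>a. v (a, y+h) - v (a, y)) has_real_derivative vx (a, y+h) - vx (a, y)) (at a)"
    if "x \<le> a" "a \<le> x+h" for a
    using that \<open>0 < h\<close> by (intro DERIV_diff vx) auto
  then obtain \<xi> where \<xi>: "x < \<xi>" "\<xi> < x+h"
    and "v (x+h, y+h) - v (x+h, y) - (v (x, y+h) - v (x, y)) = h * (vx (\<xi>, y+h) - vx (\<xi>, y))"
    using MVT2[of x "x+h" "\<lambda>a. v (a, y+h) - v (a, y)" "\<lambda>a. vx (a, y+h) - vx (a, y)"] \<open>0 < h\<close>
    by auto
  moreover obtain \<eta> where "y < \<eta>" "\<eta> < y+h" and "vx (\<xi>, y+h) - vx (\<xi>, y) = h * vxy (\<xi>, \<eta>)"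
    using MVT2[of y "y+h" "\<lambda>b. vx (\<xi>, b)" "\<lambda>b. vxy (\<xi>, b)"] vxy \<xi> \<open>0 < h\<close> by auto
  ultimately show ?thesis
    using that[of \<xi> \<eta>] by (simp add: power2_eq_square algebra_simps)
qed

lemma eq_at_if_isCont_and_agree_nearby:
  fixes A B :: "'a::metric_space \<Rightarrow> 'b::metric_space"
  assumes "isCont A p" and "isCont B p"
    and nearby: "\<And>e. e > 0 \<Longrightarrow> \<exists>q q'. dist q p < e \<and> dist q' p < e \<and> A q = B q'"
  shows "A p = B p"
proof (rule ccontr)
  assume "A p \<noteq> B p"
  define d where "d = dist (A p) (B p) / 2"
  have "d > 0" using \<open>A p \<noteq> B p\<close> by (simp add: d_def)
  obtain e1 where "e1 > 0" and e1: "\<And>q. dist q p < e1 \<Longrightarrow> dist (A q) (A p) < d"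
    using assms(1) \<open>d > 0\<close> unfolding continuous_at_eps_delta by blast
  obtain e2 where "e2 > 0" and e2: "\<And>q. dist q p < e2 \<Longrightarrow> dist (B q) (B p) < d"
    using assms(2) \<open>d > 0\<close> unfolding continuous_at_eps_delta by blast
  obtain q q' where "dist q p < min e1 e2" "dist q' p < min e1 e2" "A q = B q'"
    using nearby[of "min e1 e2"] \<open>e1 > 0\<close> \<open>e2 > 0\<close> by auto
  then have "dist (A p) (B p) < 2 * d"
    using e1[of q] e2[of q'] dist_triangle3[of "A p" "B p" "A q"] by (auto simp: dist_commute)
  then show False by (simp add: d_def)
qed

lemma mixed_partials_agree_nearby:
  fixes v :: "real \<times> real \<Rightarrow> real" and g :: "real \<times> real \<Rightarrow> real \<times> real"
  assumes "open U"
    and dv: "\<And>q. q \<in> U \<Longrightarrow> (v has_derivative (\<lambda>h. g q \<bullet> h)) (at q)"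
    and dg: "\<And>q. q \<in> U \<Longrightarrow> (g has_derivative H q) (at q)"
    and "p \<in> U" and "e > 0"
  shows "\<exists>q q'. dist q p < e \<and> dist q' p < e \<and> fst (H q (0, 1)) = snd (H q' (1, 0))"
proof -
  define A where "A q = fst (H q (0, 1))" for q
  define B where "B q = snd (H q (1, 0))" for q
  obtain r where "r > 0" and "ball p r \<subseteq> U"
    using \<open>open U\<close> \<open>p \<in> U\<close> open_contains_ball by blast
  obtain x y where p: "p = (x, y)" by fastforce
  have square: "(a, b) \<in> U" "dist (a, b) p \<le> 2 * h"
    if "h < r/2" "a \<in> {x..x+h}" "b \<in> {y..y+h}" for a b h
  proof -
    have "dist (a, b) p \<le> dist a x + dist b y"
      using sqrt_sum_squares_le_sum_abs[of "dist a x" "dist b y"] by (simp add: p dist_Pair_Pair)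
    also have "\<dots> \<le> 2 * h" using that by (simp add: dist_real_def)
    finally show "dist (a, b) p \<le> 2 * h" .
    then show "(a, b) \<in> U" using \<open>ball p r \<subseteq> U\<close> that by (auto simp: dist_commute)
  qed
  define h where "h = min r e / 4"
  have h: "0 < h" "h < r/2" "2 * h < e" using \<open>r > 0\<close> \<open>e > 0\<close> by (auto simp: h_def)
  let ?\<Delta> = "v (x+h, y+h) - v (x+h, y) - v (x, y+h) + v (x, y)"
  obtain \<xi> \<eta> where \<xi>\<eta>: "\<xi> \<in> {x<..<x+h}" "\<eta> \<in> {y<..<y+h}" and "?\<Delta> = h\<^sup>2 * A (\<xi>, \<eta>)"
  proof (rule double_difference_mean_value[OF \<open>0 < h\<close>])
    show "((\<lambda>a. v (a, b)) has_real_derivative fst (g (a, b))) (at a)"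
      if "a \<in> {x..x+h}" "b \<in> {y..y+h}" for a b
      using has_real_derivative_partial_fst[OF dv[OF square(1)[OF h(2) that]]]
      by (simp add: inner_prod_def)
    show "((\<lambda>b. fst (g (a, b))) has_real_derivative A (a, b)) (at b)"
      if "a \<in> {x..x+h}" "b \<in> {y..y+h}" for a b
      using has_real_derivative_partial_snd[OF
          has_derivative_fst[OF dg[OF square(1)[OF h(2) that]]]]
      by (simp add: A_def)
  qed
  \<comment> \<open>The double difference is symmetric in the two variables, so the transposed function
    yields the other mixed partial.\<close>
  moreover obtain \<eta>' \<xi>' where \<eta>'\<xi>': "\<eta>' \<in> {y<..<y+h}" "\<xi>' \<in> {x<..<x+h}"
    and "?\<Delta> = h\<^sup>2 * B (\<xi>', \<eta>')"
  proof (rule double_difference_mean_value[OF \<open>0 < h\<close>, where v = "\<lambda>(b, a). v (a, b)"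
        and vx = "\<lambda>(b, a). snd (g (a, b))" and vxy = "\<lambda>(b, a). B (a, b)"])
    show "((\<lambda>b. case (b, a) of (b, a) \<Rightarrow> v (a, b)) has_real_derivative
        (case (b, a) of (b, a) \<Rightarrow> snd (g (a, b)))) (at b)"
      if "b \<in> {y..y+h}" "a \<in> {x..x+h}" for a b
      using has_real_derivative_partial_snd[OF dv[OF square(1)[OF h(2) that(2,1)]]]
      by (simp add: inner_prod_def)
    show "((\<lambda>a. case (b, a) of (b, a) \<Rightarrow> snd (g (a, b))) has_real_derivative
        (case (b, a) of (b, a) \<Rightarrow> B (a, b))) (at a)"
      if "b \<in> {y..y+h}" "a \<in> {x..x+h}" for a b
      using has_real_derivative_partial_fst[OF
          has_derivative_snd[OF dg[OF square(1)[OF h(2) that(2,1)]]]]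
      by (simp add: B_def)
  qed (auto simp: algebra_simps)
  ultimately have "A (\<xi>, \<eta>) = B (\<xi>', \<eta>')" using h by simp
  moreover have "dist (\<xi>, \<eta>) p < e" "dist (\<xi>', \<eta>') p < e"
    using square(2)[OF h(2), of \<xi> \<eta>] square(2)[OF h(2), of \<xi>' \<eta>'] \<xi>\<eta> \<eta>'\<xi>' h by auto
  ultimately show ?thesis unfolding A_def B_def by blast
qed

lemma hessian_symmetric:
  fixes v :: "real \<times> real \<Rightarrow> real" and g :: "real \<times> real \<Rightarrow> real \<times> real"
  assumes "open U"
    and dv: "\<And>q. q \<in> U \<Longrightarrow> (v has_derivative (\<lambda>h. g q \<bullet> h)) (at q)"
    and dg: "\<And>q. q \<in> U \<Longrightarrow> (g has_derivative H q) (at q)"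
    and cont: "\<And>w. continuous_on U (\<lambda>q. H q w)" and "p \<in> U"
  shows "fst (H p (0, 1)) = snd (H p (1, 0))"
proof (rule eq_at_if_isCont_and_agree_nearby[where A = "\<lambda>q. fst (H q (0, 1))"
      and B = "\<lambda>q. snd (H q (1, 0))"])
  show "isCont (\<lambda>q. fst (H q (0, 1))) p" "isCont (\<lambda>q. snd (H q (1, 0))) p"
    using cont \<open>open U\<close> \<open>p \<in> U\<close> unfolding continuous_on_eq_continuous_at[OF \<open>open U\<close>]
    by (auto intro!: continuous_intros)
qed (rule mixed_partials_agree_nearby[OF assms(1) dv dg \<open>p \<in> U\<close>])

section \<open>Harmonic functions in the plane\<close>

lemma circlepath_eq_cis: "circlepath c r t = c + r * cis (2*pi*t)"
  by (simp add: circlepath cis_conv_exp mult_ac)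

lemma vector_derivative_circlepath_eq_cis:
  "vector_derivative (circlepath c r) (at t) = 2*pi*\<i>*r * cis (2*pi*t)"
  by (simp add: vector_derivative_circlepath cis_conv_exp mult_ac)

lemma circle_integral_times_cis:
  fixes F :: "complex \<Rightarrow> complex" and r R :: real
  assumes "F holomorphic_on ball c R" and "0 < r" and "r < R"
  shows "((\<lambda>t. F (c + r * cis (2*pi*t)) * cis (2*pi*t)) has_integral 0) {0..1}"
proof -
  have "path_image (circlepath c r) \<subseteq> ball c R"
    using assms by (auto simp: path_image_circlepath)
  then have "(F has_contour_integral 0) (circlepath c r)"
    by (intro Cauchy_theorem_disc_simple[OF assms(1)]) auto
  then have "((\<lambda>t. (2*pi*\<i>*r) * (F (c + r * cis (2*pi*t)) * cis (2*pi*t))) has_integral 0) {0..1}"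
    unfolding has_contour_integral circlepath_eq_cis vector_derivative_circlepath_eq_cis
    by (simp add: mult_ac)
  from has_integral_mult_right[OF this, of "1 / (2*pi*\<i>*r)"] show ?thesis
    using \<open>0 < r\<close> by simp
qed

lemma circle_integral_times_cnj_cis:
  fixes F :: "complex \<Rightarrow> complex" and r R :: real
  assumes "F holomorphic_on ball c R" and "0 < r" and "r < R"
  shows "((\<lambda>t. F (c + r * cis (2*pi*t)) * cnj (cis (2*pi*t))) has_integral r * deriv F c) {0..1}"
proof -
  have "cball c r \<subseteq> ball c R" using \<open>r < R\<close> by auto
  then have "((\<lambda>z. F z / (z - c) ^ Suc 1) has_contour_integral (2*pi*\<i> / fact 1 * (deriv ^^ 1) F c))
      (circlepath c r)"
    using assms ball_subset_cball
    by (intro Cauchy_has_contour_integral_higher_derivative_circlepath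
        holomorphic_on_imp_continuous_on holomorphic_on_subset[OF assms(1)]) auto
  moreover have "F (c + r * cis (2*pi*t)) / (r * cis (2*pi*t)) ^ Suc 1 * (2*pi*\<i>*r * cis (2*pi*t))
      = (2*pi*\<i> / r) * (F (c + r * cis (2*pi*t)) * cnj (cis (2*pi*t)))" for t
    using \<open>0 < r\<close> by (simp add: cis_cnj cis_mult field_simps)
  ultimately have "((\<lambda>t. (2*pi*\<i> / r) * (F (c + r * cis (2*pi*t)) * cnj (cis (2*pi*t))))
      has_integral 2*pi*\<i> * deriv F c) {0..1}"
    unfolding has_contour_integral circlepath_eq_cis vector_derivative_circlepath_eq_cis by simp
  from has_integral_mult_right[OF this, of "r / (2*pi*\<i>)"] show ?thesis
    using \<open>0 < r\<close> by (simp add: algebra_simps)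
qed

lemma circle_integral_Re_times_cis:
  fixes F :: "complex \<Rightarrow> complex" and r R :: real
  assumes "F holomorphic_on ball c R" and "0 < r" and "r < R"
  shows "((\<lambda>t. Re (F (c + r * cis (2*pi*t))) *\<^sub>R cis (2*pi*t)) has_integral (r/2) * cnj (deriv F c))
      {0..1}"
proof -
  define P where "P t = c + r * cis (2*pi*t)" for t
  from has_integral_cnj[THEN iffD2, OF circle_integral_times_cnj_cis[OF assms]]
  have "((\<lambda>t. cnj (F (P t) * cnj (cis (2*pi*t)))) has_integral cnj (r * deriv F c)) {0..1}"
    by (simp only: o_def P_def)
  with circle_integral_times_cis[OF assms]
  have "((\<lambda>t. (1/2) * (F (P t) * cis (2*pi*t)) + (1/2) * cnj (F (P t) * cnj (cis (2*pi*t))))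
      has_integral (1/2) * 0 + (1/2) * cnj (r * deriv F c)) {0..1}"
    unfolding P_def by (intro has_integral_add has_integral_mult_right)
  moreover have "(1/2) * (F (P t) * cis (2*pi*t)) + (1/2) * cnj (F (P t) * cnj (cis (2*pi*t)))
      = ((F (P t) + cnj (F (P t))) / 2) * cis (2*pi*t)" for t
    by (simp add: algebra_simps)
  ultimately show ?thesis
    by (simp add: P_def complex_add_cnj scaleR_conv_of_real)
qed

lemma has_derivative_Re_Im: "((\<lambda>z. (Re z, Im z)) has_derivative (\<lambda>h. (Re h, Im h))) (at z)"
  by (intro bounded_linear_imp_has_derivative bounded_linear_Pair bounded_linear_Re
      bounded_linear_Im)

definition circle_moment :: "(real \<times> real \<Rightarrow> real) \<Rightarrow> real \<times> real \<Rightarrow> real \<Rightarrow> complex" where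
  "circle_moment v c r =
     integral {0..1} (\<lambda>t. v (c + (r * cos (2*pi*t), r * sin (2*pi*t))) *\<^sub>R cis (2*pi*t))"

locale planar_harmonic =
  fixes U :: "(real \<times> real) set" and v :: "real \<times> real \<Rightarrow> real"
    and g :: "real \<times> real \<Rightarrow> real \<times> real" and H :: "real \<times> real \<Rightarrow> real \<times> real \<Rightarrow> real \<times> real"
  assumes open_domain: "open U"
    and has_gradient: "\<And>q. q \<in> U \<Longrightarrow> (v has_derivative (\<lambda>h. g q \<bullet> h)) (at q)"
    and has_hessian: "\<And>q. q \<in> U \<Longrightarrow> (g has_derivative H q) (at q)"
    and hessian_continuous: "\<And>w. continuous_on U (\<lambda>q. H q w)"
    and laplacian_zero: "\<And>q. q \<in> U \<Longrightarrow> fst (H q (1, 0)) + snd (H q (0, 1)) = 0"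
begin

definition conj_gradient :: "complex \<Rightarrow> complex" where
  "conj_gradient z = Complex (fst (g (Re z, Im z))) (- snd (g (Re z, Im z)))"

lemma conj_gradient_has_field_derivative:
  assumes "(Re z, Im z) \<in> U"
  shows "(conj_gradient has_field_derivative
      Complex (fst (H (Re z, Im z) (1, 0))) (- snd (H (Re z, Im z) (1, 0)))) (at z)"
proof -
  define q where "q = (Re z, Im z)"
  define a b where "a = fst (H q (1, 0))" and "b = snd (H q (1, 0))"
  have "q \<in> U" using assms by (simp add: q_def)
  have "linear (H q)" using has_hessian[OF \<open>q \<in> U\<close>] has_derivative_linear by blast
  have H01: "H q (0, 1) = (b, - a)"
    using hessian_symmetric[OF open_domain has_gradient has_hessian hessian_continuous \<open>q \<in> U\<close>]
      laplacian_zero[OF \<open>q \<in> U\<close>] by (simp add: a_def b_def prod_eq_iff)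
  have H_Re_Im: "H q (Re h, Im h) = (Re h * a + Im h * b, Re h * b - Im h * a)" for h
  proof -
    have "H q (Re h, Im h) = Re h *\<^sub>R H q (1, 0) + Im h *\<^sub>R H q (0, 1)"
      using linear_Pair_split[OF \<open>linear (H q)\<close>, of "Re h" "Im h"]
        linear_cmul[OF \<open>linear (H q)\<close>, of "Re h" "(1, 0)"] by simp
    then show ?thesis by (simp add: H01 a_def b_def prod_eq_iff)
  qed
  have "((\<lambda>z. g (Re z, Im z)) has_derivative (\<lambda>h. H q (Re h, Im h))) (at z)"
    using has_derivative_compose[OF has_derivative_Re_Im has_hessian[OF assms]] by (simp add: q_def)
  then have "(conj_gradient has_derivative
      (\<lambda>h. of_real (fst (H q (Re h, Im h))) - \<i> * of_real (snd (H q (Re h, Im h))))) (at z)"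
    unfolding conj_gradient_def Complex_eq
    by (auto intro!: derivative_eq_intros bounded_linear.has_derivative[OF bounded_linear_of_real])
  moreover have "(\<lambda>h. of_real (fst (H q (Re h, Im h))) - \<i> * of_real (snd (H q (Re h, Im h))))
      = (*) (Complex a (- b))"
    by (auto simp: H_Re_Im complex_eq_iff algebra_simps)
  ultimately show ?thesis by (simp add: has_field_derivative_def q_def a_def b_def)
qed

lemma has_derivative_along_Re_Im:
  assumes "(Re z, Im z) \<in> U"
  shows "((\<lambda>z. v (Re z, Im z)) has_derivative (\<lambda>h. Re (conj_gradient z * h))) (at z)"
proof -
  have "((\<lambda>z. v (Re z, Im z)) has_derivative (\<lambda>h. g (Re z, Im z) \<bullet> (Re h, Im h))) (at z)"
    using has_derivative_compose[OF has_derivative_Re_Im has_gradient[OF assms]] by simp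
  then show ?thesis by (simp add: conj_gradient_def inner_prod_def)
qed

lemma real_part_primitive:
  assumes "convex S" and "open S" and S: "\<And>z. z \<in> S \<Longrightarrow> (Re z, Im z) \<in> U"
  obtains F where "\<And>z. z \<in> S \<Longrightarrow> (F has_field_derivative conj_gradient z) (at z)"
    and "\<And>z. z \<in> S \<Longrightarrow> Re (F z) = v (Re z, Im z)"
proof -
  have "conj_gradient holomorphic_on S"
    using conj_gradient_has_field_derivative S \<open>open S\<close> by (auto simp: holomorphic_on_open)
  then obtain F where "\<And>z. z \<in> S \<Longrightarrow> (F has_field_derivative conj_gradient z) (at z within S)"
    using holomorphic_convex_primitive'[OF \<open>convex S\<close> \<open>open S\<close>] by blast
  then have F: "(F has_field_derivative conj_gradient z) (at z)" if "z \<in> S" for z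
    by (metis that at_within_open[OF that \<open>open S\<close>])
  have "((\<lambda>z. Re (F z) - v (Re z, Im z)) has_derivative (\<lambda>h. 0)) (at z within S)" if "z \<in> S" for z
    using has_derivative_diff[OF has_derivative_Re[OF F[OF that, unfolded has_field_derivative_def]]
        has_derivative_along_Re_Im[OF S[OF that]]]
    by (simp add: has_derivative_at_withinI)
  then obtain K where K: "\<forall>z\<in>S. Re (F z) - v (Re z, Im z) = K"
    using has_derivative_zero_constant[OF \<open>convex S\<close>] by blast
  show ?thesis
  proof (rule that[of "\<lambda>z. F z - of_real K"])
    show "((\<lambda>z. F z - of_real K) has_field_derivative conj_gradient z) (at z)" if "z \<in> S" for z
      using F[OF that] by (auto intro!: derivative_eq_intros)
  qed (use K in auto)
qed

lemma gradient_eq_circle_moment: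
  assumes "ball c R \<subseteq> U" and "0 < r" and "r < R"
  shows "g c = (2 / r) *\<^sub>R (Re (circle_moment v c r), Im (circle_moment v c r))"
proof -
  define c' where "c' = Complex (fst c) (snd c)"
  have dist_eq: "dist (Re z, Im z) c = dist z c'" for z
    by (cases c) (simp add: c'_def dist_norm norm_Pair cmod_def)
  obtain F where F: "\<And>z. z \<in> ball c' R \<Longrightarrow> (F has_field_derivative conj_gradient z) (at z)"
    and ReF: "\<And>z. z \<in> ball c' R \<Longrightarrow> Re (F z) = v (Re z, Im z)"
  proof (rule real_part_primitive[of "ball c' R"])
    show "(Re z, Im z) \<in> U" if "z \<in> ball c' R" for z
      using that assms(1) dist_eq[of z] by (auto simp: dist_commute)
  qed auto
  have "F holomorphic_on ball c' R"
    using F by (auto simp: holomorphic_on_open simp del: mem_ball)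
  from circle_integral_Re_times_cis[OF this assms(2,3)]
  have "((\<lambda>t. Re (F (c' + r * cis (2*pi*t))) *\<^sub>R cis (2*pi*t))
      has_integral (r/2) * cnj (conj_gradient c')) {0..1}"
    using F[of c'] \<open>0 < r\<close> \<open>r < R\<close> by (simp add: DERIV_imp_deriv)
  moreover have "Re (F (c' + r * cis (2*pi*t))) = v (c + (r * cos (2*pi*t), r * sin (2*pi*t)))"
    for t
    using ReF[of "c' + r * cis (2*pi*t)"] \<open>0 < r\<close> \<open>r < R\<close>
    by (cases c) (simp add: c'_def dist_norm norm_mult)
  ultimately have moment: "circle_moment v c r = (r/2) * cnj (conj_gradient c')"
    unfolding circle_moment_def by (simp add: integral_unique)
  have "Re (circle_moment v c r) = r/2 * fst (g c)" "Im (circle_moment v c r) = r/2 * snd (g c)"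
    using arg_cong[OF moment, of Re] arg_cong[OF moment, of Im]
    by (simp_all add: conj_gradient_def c'_def)
  then show ?thesis
    using \<open>0 < r\<close> by (simp add: prod_eq_iff field_simps)
qed

end

section \<open>Joint differentiability of the gradient\<close>

lemma grad_xy_eqI:
  assumes "((\<lambda>q. u (q, s)) has_derivative (\<lambda>h. g \<bullet> h)) (at p)"
  shows "grad_xy u p s = g"
proof -
  have "((\<lambda>q. u (q, s)) has_derivative (\<lambda>h. grad_xy u p s \<bullet> h)) (at p)"
    unfolding grad_xy_def by (rule someI, rule assms)
  from has_derivative_unique[OF this assms] show ?thesis
    by (metis vector_eq_rdot)
qed

lemma harmonic_on_imp_planar_harmonic:
  assumes "open U" and "harmonic_on U (\<lambda>p. u (p, s))"
  obtains H where "planar_harmonic U (\<lambda>p. u (p, s)) (\<lambda>p. grad_xy u p s) H"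
proof -
  obtain g H where g: "\<forall>p\<in>U. ((\<lambda>p. u (p, s)) has_derivative (\<lambda>h. g p \<bullet> h)) (at p)"
    and H: "\<forall>p\<in>U. (g has_derivative H p) (at p)" "\<forall>w. continuous_on U (\<lambda>p. H p w)"
      "\<forall>p\<in>U. fst (H p (1, 0)) + snd (H p (0, 1)) = 0"
    using assms(2) unfolding harmonic_on_def by blast
  have grad: "grad_xy u p s = g p" if "p \<in> U" for p
    using g that by (blast intro: grad_xy_eqI)
  have "((\<lambda>p. grad_xy u p s) has_derivative H p) (at p)" if "p \<in> U" for p
    using has_derivative_transform_within_open[OF H(1)[rule_format, OF that] assms(1) that] grad
    by simp
  with g H grad show ?thesis
    by (intro that[of H]) (unfold_locales, auto simp: assms(1))
qed

lemma circle_moment_slices_differentiable: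
  fixes u :: "(real \<times> real) \<times> real \<Rightarrow> real"
  assumes "C1_on (U \<times> J) u" and "is_interval J" and "ball p (2 * r) \<subseteq> U" and "0 < r" and "s \<in> J"
  shows "(\<lambda>x. circle_moment (\<lambda>q. u (q, snd x)) (fst x) r)
    differentiable (at (p, s) within ball p r \<times> J)"
proof -
  define \<gamma> where "\<gamma> t = ((r * cos (2*pi*t), r * sin (2*pi*t)), 0 :: real)" for t
  have "(\<lambda>x. circle_moment (\<lambda>q. u (q, snd x)) (fst x) r)
      = (\<lambda>x. integral {0..1} (\<lambda>t. u (x + \<gamma> t) *\<^sub>R cis (2*pi*t)))"
    by (auto simp: circle_moment_def \<gamma>_def)
  moreover have "(\<lambda>x. integral {0..1} (\<lambda>t. u (x + \<gamma> t) *\<^sub>R cis (2*pi*t)))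
      differentiable (at (p, s) within ball p r \<times> J)"
  proof (rule integral_translates_differentiable[OF assms(1)])
    show "convex (ball p r \<times> J)"
      by (intro convex_Times convex_ball is_interval_convex \<open>is_interval J\<close>)
    show "x + \<gamma> t \<in> U \<times> J" if "x \<in> ball p r \<times> J" for x t
    proof -
      obtain c s' where x: "x = (c, s')" and "dist p c < r" and "s' \<in> J"
        using \<open>x \<in> ball p r \<times> J\<close> by (cases x) auto
      have "dist c (c + (r * cos (2*pi*t), r * sin (2*pi*t))) = r"
        using \<open>0 < r\<close> by (simp add: dist_norm norm_Pair power_mult_distrib flip: distrib_left)
      then have "c + (r * cos (2*pi*t), r * sin (2*pi*t)) \<in> ball p (2 * r)"
        using \<open>dist p c < r\<close> dist_triangle[of p "c + (r * cos (2*pi*t), r * sin (2*pi*t))" c]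
        by simp
      then show ?thesis
        using assms(3) \<open>s' \<in> J\<close> by (auto simp: x \<gamma>_def)
    qed
  qed (use assms(4,5) in \<open>auto simp: \<gamma>_def intro!: continuous_intros\<close>)
  ultimately show ?thesis by simp
qed

lemma grad_xy_eq_circle_moment:
  assumes "open U" and "harmonic_on U (\<lambda>q. u (q, s))" and "ball c R \<subseteq> U" and "0 < r" and "r < R"
  shows "grad_xy u c s = (2 / r) *\<^sub>R
      (Re (circle_moment (\<lambda>q. u (q, s)) c r), Im (circle_moment (\<lambda>q. u (q, s)) c r))"
proof -
  obtain H where "planar_harmonic U (\<lambda>q. u (q, s)) (\<lambda>q. grad_xy u q s) H"
    using harmonic_on_imp_planar_harmonic[OF assms(1,2)] by blast
  from planar_harmonic.gradient_eq_circle_moment[OF this assms(3-5)] show ?thesis .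
qed

lemma grad_xy_differentiable_within:
  fixes u :: "(real \<times> real) \<times> real \<Rightarrow> real"
  assumes "open U" and "is_interval J" and "C1_on (U \<times> J) u"
    and harmonic: "\<forall>s\<in>J. harmonic_on U (\<lambda>p. u (p, s))" and "p \<in> U" and "s \<in> J"
  shows "case_prod (grad_xy u) differentiable (at (p, s) within U \<times> J)"
proof -
  obtain e where "e > 0" and "ball p e \<subseteq> U"
    using \<open>open U\<close> \<open>p \<in> U\<close> open_contains_ball by blast
  define r where "r = e / 3"
  have "r > 0" and "ball p (3 * r) \<subseteq> U"
    using \<open>e > 0\<close> \<open>ball p e \<subseteq> U\<close> by (simp_all add: r_def)
  define W where "W = ball p r \<times> J"
  define M where "M x = circle_moment (\<lambda>q. u (q, snd x)) (fst x) r" for x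
  have ball_in_U: "ball c (2 * r) \<subseteq> U" if "c \<in> ball p r" for c
  proof
    fix q assume "q \<in> ball c (2 * r)"
    then have "dist p q < 3 * r" using that dist_triangle[of p q c] by simp
    then show "q \<in> U" using \<open>ball p (3 * r) \<subseteq> U\<close> by auto
  qed
  have "ball p (2 * r) \<subseteq> U" using ball_in_U[of p] \<open>r > 0\<close> by simp
  from circle_moment_slices_differentiable[OF assms(3,2) this \<open>r > 0\<close> \<open>s \<in> J\<close>]
  obtain DM where "(M has_derivative DM) (at (p, s) within W)"
    unfolding differentiable_def M_def W_def by blast
  then have "((\<lambda>x. (2 / r) *\<^sub>R (Re (M x), Im (M x))) has_derivative
      (\<lambda>h. (2 / r) *\<^sub>R (Re (DM h), Im (DM h)))) (at (p, s) within W)"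
    by (intro has_derivative_scaleR_right has_derivative_Pair has_derivative_Re has_derivative_Im)
  then have "case_prod (grad_xy u) differentiable (at (p, s) within W)"
  proof (rule differentiableI[THEN differentiable_transform_within, OF _ zero_less_one])
    show "(p, s) \<in> W" using \<open>r > 0\<close> \<open>s \<in> J\<close> by (simp add: W_def)
    show "(2 / r) *\<^sub>R (Re (M x), Im (M x)) = case_prod (grad_xy u) x" if "x \<in> W" for x
      using that grad_xy_eq_circle_moment[OF \<open>open U\<close> _ ball_in_U] harmonic \<open>r > 0\<close>
      by (auto simp: W_def M_def)
  qed
  moreover have "at (p, s) within W = at (p, s) within U \<times> J"
    using \<open>r > 0\<close> \<open>ball p (3 * r) \<subseteq> U\<close>
    by (intro at_within_nhd[of _ "ball p r \<times> UNIV"]) (auto simp: W_def open_Times)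
  ultimately show ?thesis by simp
qed

lemma harmonic_slice_partial_derivatives:
  assumes "open U" and "harmonic_on U (\<lambda>q. u (q, s))" and "p \<in> U" and "s \<in> J"
    and Du: "(u has_derivative Du) (at (p, s) within U \<times> J)"
    and DG: "(case_prod (grad_xy u) has_derivative DG) (at (p, s) within U \<times> J)"
  shows "Du (h, 0) = grad_xy u p s \<bullet> h"
    and "fst (DG ((1, 0), 0)) + snd (DG ((0, 1), 0)) = 0"
proof -
  obtain H where "planar_harmonic U (\<lambda>q. u (q, s)) (\<lambda>q. grad_xy u q s) H"
    using harmonic_on_imp_planar_harmonic[OF assms(1,2)] by blast
  note harmonic = planar_harmonic.has_gradient[OF this \<open>p \<in> U\<close>]
    planar_harmonic.has_hessian[OF this \<open>p \<in> U\<close>] planar_harmonic.laplacian_zero[OF this \<open>p \<in> U\<close>]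
  have "Du (h, 0) = grad_xy u p s \<bullet> h" and "DG (h, 0) = H p h" for h
    using has_derivative_partial_fst_unique[OF assms(1,3,4) Du harmonic(1)]
      has_derivative_partial_fst_unique[OF assms(1,3,4) DG] harmonic(2) by simp_all
  with harmonic(3) show "Du (h, 0) = grad_xy u p s \<bullet> h"
    and "fst (DG ((1, 0), 0)) + snd (DG ((0, 1), 0)) = 0" by simp_all
qed

section \<open>The divergence of the field\<close>

definition trace_R3 :: "((real \<times> real) \<times> real \<Rightarrow> (real \<times> real) \<times> real) \<Rightarrow> real" where
  "trace_R3 D = fst (fst (D ((1, 0), 0))) + snd (fst (D ((0, 1), 0))) + snd (D ((0, 0), 1))"

lemma divergence_free_on_iff_trace_R3:
  "divergence_free_on S F \<longleftrightarrow> (\<forall>q\<in>S. \<exists>D. (F has_derivative D) (at q within S) \<and> trace_R3 D = 0)"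
  by (simp add: divergence_free_on_def trace_R3_def)

lemma phi_field_has_derivative:
  assumes "(case_prod (grad_xy u) has_derivative DG) (at (p, t (p, z)) within U \<times> J)"
    and "(t has_derivative Dt) (at (p, z) within U \<times> I)" and "t ` (U \<times> I) \<subseteq> J"
  shows "(phi_field u t has_derivative
      (\<lambda>w. (2 *\<^sub>R DG (fst w, Dt w), 2 * (grad_xy u p (t (p, z)) \<bullet> DG (fst w, Dt w)))))
      (at (p, z) within U \<times> I)"
proof -
  define G where "G = (\<lambda>y. grad_xy u (fst y) (t y))"
  have dG: "(G has_derivative (\<lambda>w. DG (fst w, Dt w))) (at (p, z) within U \<times> I)"
    unfolding G_def using has_derivative_along_graph[OF assms] by simp
  have "phi_field u t = (\<lambda>y. (2 *\<^sub>R G y, G y \<bullet> G y))"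
    by (auto simp: phi_field_def G_def power2_norm_eq_inner Let_def)
  moreover have "((\<lambda>y. (2 *\<^sub>R G y, G y \<bullet> G y)) has_derivative
      (\<lambda>w. (2 *\<^sub>R DG (fst w, Dt w), G (p, z) \<bullet> DG (fst w, Dt w) + DG (fst w, Dt w) \<bullet> G (p, z))))
      (at (p, z) within U \<times> I)"
    by (intro has_derivative_Pair has_derivative_scaleR_right has_derivative_inner dG)
  ultimately show ?thesis
    by (simp add: G_def inner_commute)
qed

lemma level_identity_derivative:
  fixes U :: "'a::euclidean_space set" and I :: "real set"
    and u :: "'a \<times> 'b::real_normed_vector \<Rightarrow> real"
  assumes "(u has_derivative Du) (at (p, t (p, z)) within U \<times> J)"
    and "(t has_derivative Dt) (at (p, z) within U \<times> I)" and "t ` (U \<times> I) \<subseteq> J"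
    and level: "\<forall>p\<in>U. \<forall>z\<in>I. u (p, t (p, z)) = z"
    and "open U" and "p \<in> U" and "is_interval I" and "z \<in> I" and "z' \<in> I" and "z' \<noteq> z"
  shows "Du (fst w, Dt w) = snd w"
proof -
  have "((\<lambda>y. u (fst y, t y)) has_derivative (\<lambda>w. Du (fst w, Dt w))) (at (p, z) within U \<times> I)"
    by (rule has_derivative_along_graph[OF assms(1-3)])
  moreover have "((\<lambda>y. u (fst y, t y)) has_derivative snd) (at (p, z) within U \<times> I)"
    using \<open>p \<in> U\<close> \<open>z \<in> I\<close> level
    by (intro has_derivative_transform_within[OF
          has_derivative_snd[OF has_derivative_ident] zero_less_one]) auto
  ultimately have "(\<lambda>w. Du (fst w, Dt w)) = snd"
    by (rule has_derivative_unique_within_Times_interval[OF _ _ assms(5-10)])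
  then show ?thesis by (rule fun_cong)
qed

lemma trace_R3_eq_0_of_level_relations:
  fixes DG :: "(real \<times> real) \<times> real \<Rightarrow> real \<times> real" and Du Dt :: "(real \<times> real) \<times> real \<Rightarrow> real"
  assumes "linear DG" and "linear Du"
    and Du_partial: "\<And>h. Du (h, 0) = g \<bullet> h"
    and laplacian: "fst (DG ((1, 0), 0)) + snd (DG ((0, 1), 0)) = 0"
    and level: "\<And>w. Du (fst w, Dt w) = snd w"
  shows "trace_R3 (\<lambda>w. (2 *\<^sub>R DG (fst w, Dt w), 2 * (g \<bullet> DG (fst w, Dt w)))) = 0"
proof -
  define a \<gamma> where "a = DG (0, 1)" and "\<gamma> = Du (0, 1)"
  define \<tau>\<^sub>1 \<tau>\<^sub>2 \<beta> where "\<tau>\<^sub>1 = Dt ((1, 0), 0)" and "\<tau>\<^sub>2 = Dt ((0, 1), 0)" and "\<beta> = Dt ((0, 0), 1)"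
  have DG: "DG (h, \<sigma>) = DG (h, 0) + \<sigma> *\<^sub>R a" for h \<sigma>
    unfolding a_def by (rule linear_Pair_split[OF \<open>linear DG\<close>])
  have "DG ((0, 0), 0) = 0"
    using linear_0[OF \<open>linear DG\<close>] by (simp add: zero_prod_def)
  then have DG_basis: "DG ((1, 0), \<tau>\<^sub>1) = DG ((1, 0), 0) + \<tau>\<^sub>1 *\<^sub>R a"
      "DG ((0, 1), \<tau>\<^sub>2) = DG ((0, 1), 0) + \<tau>\<^sub>2 *\<^sub>R a" "DG ((0, 0), \<beta>) = \<beta> *\<^sub>R a"
    using DG[of "(1, 0)" \<tau>\<^sub>1] DG[of "(0, 1)" \<tau>\<^sub>2] DG[of "(0, 0)" \<beta>] by simp_all
  have Du: "Du (h, \<sigma>) = g \<bullet> h + \<sigma> * \<gamma>" for h \<sigma>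
    using linear_Pair_split[OF \<open>linear Du\<close>, of h \<sigma>] Du_partial[of h] by (simp add: \<gamma>_def)
  have "fst g + \<tau>\<^sub>1 * \<gamma> = 0" "snd g + \<tau>\<^sub>2 * \<gamma> = 0" "\<beta> * \<gamma> = 1"
    using level[of "((1, 0), 0)"] level[of "((0, 1), 0)"] level[of "((0, 0), 1)"]
    by (simp_all add: Du \<tau>\<^sub>1_def \<tau>\<^sub>2_def \<beta>_def inner_prod_def)
  then have "\<tau>\<^sub>1 * fst a + \<tau>\<^sub>2 * snd a + \<beta> * (fst g * fst a + snd g * snd a) = 0"
    by algebra
  then show ?thesis
    using laplacian
    by (simp add: trace_R3_def DG_basis \<tau>\<^sub>1_def [symmetric] \<tau>\<^sub>2_def [symmetric] \<beta>_def [symmetric]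
        inner_prod_def algebra_simps)
qed

lemma phi_field_differentiable_within:
  assumes "open U" and "is_interval J" and "C1_on (U \<times> J) u"
    and "\<forall>s\<in>J. harmonic_on U (\<lambda>p. u (p, s))"
    and "t ` (U \<times> I) \<subseteq> J" and "C1_on (U \<times> I) t" and "p \<in> U" and "z \<in> I"
  shows "phi_field u t differentiable (at (p, z) within U \<times> I)"
proof -
  have "t (p, z) \<in> J" using assms(5,7,8) by auto
  then obtain DG where "(case_prod (grad_xy u) has_derivative DG) (at (p, t (p, z)) within U \<times> J)"
    using grad_xy_differentiable_within[OF assms(1-4,7)] unfolding differentiable_def by blast
  moreover obtain Dt where "(t has_derivative Dt) (at (p, z) within U \<times> I)"
    using assms(6-8) unfolding C1_on_def by blast
  ultimately show ?thesis
    using phi_field_has_derivative[OF _ _ assms(5)] unfolding differentiable_def by blast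
qed

lemma trace_R3_phi_field_derivative:
  assumes "open U" and "is_interval I" and "is_interval J" and "C1_on (U \<times> J) u"
    and "\<forall>s\<in>J. harmonic_on U (\<lambda>p. u (p, s))"
    and "t ` (U \<times> I) \<subseteq> J" and "C1_on (U \<times> I) t"
    and "\<forall>p\<in>U. \<forall>z\<in>I. u (p, t (p, z)) = z"
    and "p \<in> U" and "z \<in> I" and "z' \<in> I" and "z' \<noteq> z"
    and dphi: "(phi_field u t has_derivative D) (at (p, z) within U \<times> I)"
  shows "trace_R3 D = 0"
proof -
  define s where "s = t (p, z)"
  have "s \<in> J" using assms(6,9,10) by (auto simp: s_def)
  obtain DG where DG: "(case_prod (grad_xy u) has_derivative DG) (at (p, s) within U \<times> J)"
    using grad_xy_differentiable_within[OF assms(1,3,4,5,9) \<open>s \<in> J\<close>]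
    unfolding differentiable_def by blast
  obtain Du where Du: "(u has_derivative Du) (at (p, s) within U \<times> J)"
    using assms(4,9) \<open>s \<in> J\<close> unfolding C1_on_def by blast
  obtain Dt where Dt: "(t has_derivative Dt) (at (p, z) within U \<times> I)"
    using assms(7,9,10) unfolding C1_on_def by blast
  have "D = (\<lambda>w. (2 *\<^sub>R DG (fst w, Dt w), 2 * (grad_xy u p s \<bullet> DG (fst w, Dt w))))"
    using phi_field_has_derivative[OF DG[unfolded s_def] Dt assms(6)] unfolding s_def
    by (rule has_derivative_unique_within_Times_interval[OF dphi _ assms(1,9,2,10-12)])
  moreover have "Du (fst w, Dt w) = snd w" for w
    by (rule level_identity_derivative[OF Du[unfolded s_def] Dt assms(6,8,1,9,2,10-12)])
  moreover note harmonic_slice_partial_derivatives[OF assms(1) assms(5)[rule_format, OF \<open>s \<in> J\<close>]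
      assms(9) \<open>s \<in> J\<close> Du DG]
  ultimately show ?thesis
    using has_derivative_linear[OF DG] has_derivative_linear[OF Du]
    by (simp add: trace_R3_eq_0_of_level_relations)
qed

theorem lemma3p1:
  fixes U :: "(real \<times> real) set" and I J :: "real set"
    and u :: "(real \<times> real) \<times> real \<Rightarrow> real"
    and t :: "(real \<times> real) \<times> real \<Rightarrow> real"
  assumes "open U" and "is_interval I" and "is_interval J"
    and "u ` (U \<times> J) \<subseteq> I" and "C1_on (U \<times> J) u"
    and "\<forall>s\<in>J. harmonic_on U (\<lambda>p. u (p, s))"
    and "t ` (U \<times> I) \<subseteq> J" and "C1_on (U \<times> I) t"
    and "\<forall>p\<in>U. \<forall>z\<in>I. u (p, t (p, z)) = z"
  shows "divergence_free_on (U \<times> I) (phi_field u t)"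
  unfolding divergence_free_on_iff_trace_R3
proof (clarify)
  fix p z assume "p \<in> U" and "z \<in> I"
  obtain D where D: "(phi_field u t has_derivative D) (at (p, z) within U \<times> I)"
    using phi_field_differentiable_within[OF assms(1,3,5-8) \<open>p \<in> U\<close> \<open>z \<in> I\<close>]
    unfolding differentiable_def by blast
  show "\<exists>D. (phi_field u t has_derivative D) (at (p, z) within U \<times> I) \<and> trace_R3 D = 0"
  proof (cases "I = {z}")
    case True
    \<comment> \<open>Then a derivative within \<open>U \<times> I\<close> is only determined up to its \<open>z\<close>-column.\<close>
    with has_derivative_within_slice_add_snd[OF D, of "((0, 0), - trace_R3 D)"] \<open>p \<in> U\<close>
    show ?thesis by (intro exI) (auto simp: trace_R3_def)
  next
    case False
    then obtain z' where "z' \<in> I" and "z' \<noteq> z" using \<open>z \<in> I\<close> by blast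
    with trace_R3_phi_field_derivative[OF assms(1-3,5-9) \<open>p \<in> U\<close> \<open>z \<in> I\<close> _ _ D] D
    show ?thesis by blast
  qed
qed

end
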